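(* Let ${\cal X}$ be finite with $|{\cal X}|\ge 2$, $f\sim\mathcal{GP}(0,k)$ with $k$ positive semidefinite, and let $\zeta_t$ be a random variable, independent of $f$ and of ${\cal D}_{t-1}$, following the shifted exponential distribution with shift $s_t=2\log(|{\cal X}|/2)$ and rate $\lambda=1/2$. Let $\mathbf{x}^*=\arg\max_{\mathbf{x}\in{\cal X}}f(\mathbf{x})$. Then for every $t\ge1$ and any given ${\cal D}_{t-1}$, $$\mathbb{E}\bigl[f(\mathbf{x}^* )\mid{\cal D}_{t-1}\bigr]\le \mathbb{E}\Bigl[\max_{\mathbf{x}\in{\cal X}}\ \mu_{t-1}(\mathbf{x})+\zeta_t^{1/2}\sigma_{t-1}(\mathbf{x})\ \Big|\ {\cal D}_{t-1}\Bigr].$$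
   Context: Observation model: $y_i=f(\mathbf{x}_i)+\epsilon_i$ with $\epsilon_i\sim\mathcal N(0,\sigma^2)$ i.i.d., $\sigma^2>0$, independent of $f$; ${\cal D}_{t-1}=\{(\mathbf{x}_i,y_i)\}_{i=1}^{t-1}$; $\mu_{t-1},\sigma^2_{t-1}$ denote the GP posterior mean and variance of $f$ given ${\cal D}_{t-1}$ (standard GP regression formulas with noise variance $\sigma^2$). The shifted exponential distribution with shift $s$ and rate $\lambda$ is the law of $s+Z$ with $Z\sim\mathrm{Exp}(\lambda)$, i.e. density $\lambda e^{-\lambda(\zeta-s)}$ for $\zeta\ge s$ and $0$ otherwise. *)

theory Defs
  imports "HOL-Probability.Probability"
begin

definition real_gaussian_rv :: "'w measure \<Rightarrow> ('w \<Rightarrow> real) \<Rightarrow> real \<Rightarrow> real \<Rightarrow> bool" where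
  "real_gaussian_rv M X a v \<longleftrightarrow>
     X \<in> borel_measurable M \<and>
     (if v = 0 then (AE \<omega> in M. X \<omega> = a)
      else v > 0 \<and> distributed M lborel X (normal_density a (sqrt v)))"

definition gaussian_vec ::
  "'w measure \<Rightarrow> ('w \<Rightarrow> 'x::finite \<Rightarrow> real) \<Rightarrow> ('x \<Rightarrow> real) \<Rightarrow> ('x \<Rightarrow> 'x \<Rightarrow> real) \<Rightarrow> bool" where
  "gaussian_vec M F m C \<longleftrightarrow>
     prob_space M \<and>
     (\<forall>c :: 'x \<Rightarrow> real. real_gaussian_rv M (\<lambda>\<omega>. \<Sum>x\<in>UNIV. c x * F \<omega> x)
        (\<Sum>x\<in>UNIV. c x * m x) (\<Sum>x\<in>UNIV. \<Sum>y\<in>UNIV. c x * c y * C x y))"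

definition psd_kernel :: "('x::finite \<Rightarrow> 'x \<Rightarrow> real) \<Rightarrow> bool" where
  "psd_kernel k \<longleftrightarrow> (\<forall>x y. k x y = k y x) \<and>
     (\<forall>c :: 'x \<Rightarrow> real. (\<Sum>x\<in>UNIV. \<Sum>y\<in>UNIV. c x * c y * k x y) \<ge> 0)"

definition gram_reg :: "('x \<Rightarrow> 'x \<Rightarrow> real) \<Rightarrow> real \<Rightarrow> 'x list \<Rightarrow> nat \<Rightarrow> nat \<Rightarrow> real" where
  "gram_reg k s2 xs i j = k (xs ! i) (xs ! j) + (if i = j then s2 else 0)"

definition gram_reg_inv :: "('x \<Rightarrow> 'x \<Rightarrow> real) \<Rightarrow> real \<Rightarrow> 'x list \<Rightarrow> nat \<Rightarrow> nat \<Rightarrow> real" where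
  "gram_reg_inv k s2 xs = (THE B.
     (\<forall>i<length xs. \<forall>l<length xs.
        (\<Sum>j<length xs. gram_reg k s2 xs i j * B j l) = (if i = l then 1 else 0)) \<and>
     (\<forall>i j. length xs \<le> i \<or> length xs \<le> j \<longrightarrow> B i j = 0))"

definition post_mean :: "('x \<Rightarrow> 'x \<Rightarrow> real) \<Rightarrow> real \<Rightarrow> 'x list \<Rightarrow> real list \<Rightarrow> 'x \<Rightarrow> real" where
  "post_mean k s2 xs ys x =
     (\<Sum>i<length xs. \<Sum>j<length xs. k x (xs ! i) * gram_reg_inv k s2 xs i j * ys ! j)"

definition post_cov :: "('x \<Rightarrow> 'x \<Rightarrow> real) \<Rightarrow> real \<Rightarrow> 'x list \<Rightarrow> 'x \<Rightarrow> 'x \<Rightarrow> real" where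
  "post_cov k s2 xs x x' = k x x' -
     (\<Sum>i<length xs. \<Sum>j<length xs. k x (xs ! i) * gram_reg_inv k s2 xs i j * k (xs ! j) x')"

definition post_sd :: "('x \<Rightarrow> 'x \<Rightarrow> real) \<Rightarrow> real \<Rightarrow> 'x list \<Rightarrow> 'x \<Rightarrow> real" where
  "post_sd k s2 xs x = sqrt (post_cov k s2 xs x x)"

definition shifted_exp_density :: "real \<Rightarrow> real \<Rightarrow> real \<Rightarrow> real" where
  "shifted_exp_density s l z = exponential_density l (z - s)"

end

theory Submission
  imports Defs
begin

text \<open>Standardise each coordinate, Z_x = (f(x) - \<mu>(x)) / \<sigma>(x), and let
  W = (max_x max(0, Z_x))^2. Then f(x) \<le> \<mu>(x) + \<surd>W \<sigma>(x) for every x, so max_x f(x) \<le> g(W)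
  for the nondecreasing function g(z) = max_x (\<mu>(x) + \<surd>z \<sigma>(x)). The Gaussian tail bound
  P(Z \<ge> r) \<le> e^(-r^2/2)/2 and the union bound give P(W \<ge> a) \<le> |X| e^(-a/2)/2, which is exactly
  P(\<zeta> > a) for a above the shift 2 log(|X|/2); below the shift P(\<zeta> > a) = 1. Hence \<zeta> stochastically
  dominates W and E g(W) \<le> E g(\<zeta>).\<close>

section \<open>Stochastic dominance\<close>

lemma nn_integral_layer_cake:
  assumes "sigma_finite_measure M" and f[measurable]: "f \<in> borel_measurable M"
  shows "(\<integral>\<^sup>+x. ennreal (f x) \<partial>M) =
    (\<integral>\<^sup>+t. emeasure M {x\<in>space M. t < f x} * indicator {0..} t \<partial>lborel)"
proof -
  interpret sigma_finite_measure M by fact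
  interpret P: pair_sigma_finite M lborel
    by (simp add: pair_sigma_finite_def lborel.sigma_finite_measure_axioms sigma_finite_measure_axioms)
  have "ennreal (f x) = (\<integral>\<^sup>+t. indicator {0..<f x} t \<partial>lborel)" for x
    by (cases "0 \<le> f x") (auto simp: ennreal_neg)
  then have "(\<integral>\<^sup>+x. ennreal (f x) \<partial>M) = (\<integral>\<^sup>+x. (\<integral>\<^sup>+t. indicator {0..<f x} t \<partial>lborel) \<partial>M)"
    by simp
  also have "\<dots> = (\<integral>\<^sup>+t. (\<integral>\<^sup>+x. indicator {0..<f x} t \<partial>M) \<partial>lborel)"
  proof (rule P.Fubini'[symmetric])
    have "(\<lambda>(x, t). indicator {0..<f x} t :: ennreal) =
        (\<lambda>p. if 0 \<le> snd p \<and> snd p < f (fst p) then 1 else 0)"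
      by (auto simp: fun_eq_iff split: split_indicator)
    then show "(\<lambda>(x, t). indicator {0..<f x} t :: ennreal) \<in> borel_measurable (M \<Otimes>\<^sub>M lborel)"
      by simp
  qed
  also have "\<dots> = (\<integral>\<^sup>+t. emeasure M {x\<in>space M. t < f x} * indicator {0..} t \<partial>lborel)"
  proof (rule nn_integral_cong)
    fix t :: real
    have "(\<integral>\<^sup>+x. indicator {0..<f x} t \<partial>M) =
        (\<integral>\<^sup>+x. indicator {x\<in>space M. t < f x} x * indicator {0..} t \<partial>M)"
      by (rule nn_integral_cong) (auto split: split_indicator)
    then show "(\<integral>\<^sup>+x. indicator {0..<f x} t \<partial>M) = emeasure M {x\<in>space M. t < f x} * indicator {0..} t"
      by (simp add: nn_integral_multc)
  qed
  finally show ?thesis .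
qed

lemma mono_superlevel_set_cases:
  fixes \<phi> :: "real \<Rightarrow> real"
  assumes "mono \<phi>"
  obtains "{u. t < \<phi> u} = {}"
  | "{u. t < \<phi> u} = UNIV"
  | a where "{a<..} \<subseteq> {u. t < \<phi> u}" and "{u. t < \<phi> u} \<subseteq> {a..}"
proof -
  define U where "U = {u. t < \<phi> u}"
  have up: "v \<in> U" if "u \<in> U" "u < v" for u v
    using that monoD[OF assms, of u v] by (auto simp: U_def)
  show thesis
  proof (cases "U = {}")
    case True
    then show thesis using that(1) unfolding U_def by blast
  next
    case nonempty: False
    show thesis
    proof (cases "bdd_below U")
      case False
      have "z \<in> U" for z
      proof -
        from False have "\<not> (\<forall>u\<in>U. z \<le> u)" unfolding bdd_below_def by blast
        then obtain u where "u \<in> U" "u < z" by (auto simp: not_le)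
        then show "z \<in> U" by (rule up)
      qed
      then show thesis using that(2) unfolding U_def by blast
    next
      case True
      have "{Inf U<..} \<subseteq> U"
      proof
        fix z assume "z \<in> {Inf U<..}"
        then obtain u where "u \<in> U" "u < z" using cInf_less_iff[OF nonempty True] by auto
        then show "z \<in> U" by (rule up)
      qed
      moreover have "U \<subseteq> {Inf U..}" using True by (auto intro: cInf_lower)
      ultimately show thesis using that(3) unfolding U_def by blast
    qed
  qed
qed

text \<open>By the layer-cake formula it suffices to compare superlevel sets of \<phi>, which are rays.\<close>
lemma nn_integral_mono_stochastic_dominance:
  fixes W :: "'a \<Rightarrow> real" and \<phi> :: "real \<Rightarrow> real"
  assumes "prob_space M" and "prob_space N" and sets_N: "sets N = sets borel"
    and W[measurable]: "W \<in> borel_measurable M" and \<phi>[measurable]: "\<phi> \<in> borel_measurable borel"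
    and "mono \<phi>"
    and dominated: "\<And>a. emeasure M {x\<in>space M. a \<le> W x} \<le> emeasure N {z. a < z}"
  shows "(\<integral>\<^sup>+x. ennreal (\<phi> (W x)) \<partial>M) \<le> (\<integral>\<^sup>+z. ennreal (\<phi> z) \<partial>N)"
proof -
  interpret M: prob_space M by fact
  interpret N: prob_space N by fact
  have space_N: "space N = UNIV" using sets_eq_imp_space_eq[OF sets_N] by simp
  have \<phi>_N[measurable]: "\<phi> \<in> borel_measurable N" using measurable_cong_sets[OF sets_N refl] \<phi> by blast
  have level: "emeasure M {x\<in>space M. t < \<phi> (W x)} \<le> emeasure N {z\<in>space N. t < \<phi> z}" for t
  proof (cases rule: mono_superlevel_set_cases[OF \<open>mono \<phi>\<close>, of t])
    case 1
    then have "{x\<in>space M. t < \<phi> (W x)} = {}" by auto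
    then show ?thesis by (metis emeasure_empty zero_le)
  next
    case 2
    then have "{z\<in>space N. t < \<phi> z} = space N" by auto
    then show ?thesis using M.emeasure_le_1 N.emeasure_space_1 by simp
  next
    case (3 a)
    have "emeasure M {x\<in>space M. t < \<phi> (W x)} \<le> emeasure M {x\<in>space M. a \<le> W x}"
      using 3(2) by (intro emeasure_mono) auto
    also have "\<dots> \<le> emeasure N {z. a < z}" by (rule dominated)
    also have "\<dots> \<le> emeasure N {z\<in>space N. t < \<phi> z}"
    proof (rule emeasure_mono)
      show "{z. a < z} \<subseteq> {z\<in>space N. t < \<phi> z}" using 3(1) space_N by auto
    qed measurable
    finally show ?thesis .
  qed
  have "(\<integral>\<^sup>+x. ennreal (\<phi> (W x)) \<partial>M) =
      (\<integral>\<^sup>+t. emeasure M {x\<in>space M. t < \<phi> (W x)} * indicator {0..} t \<partial>lborel)"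
    by (rule nn_integral_layer_cake) (simp_all add: M.sigma_finite_measure_axioms)
  also have "\<dots> \<le> (\<integral>\<^sup>+t. emeasure N {z\<in>space N. t < \<phi> z} * indicator {0..} t \<partial>lborel)"
    by (intro nn_integral_mono mult_right_mono level) simp
  also have "\<dots> = (\<integral>\<^sup>+z. ennreal (\<phi> z) \<partial>N)"
    by (rule nn_integral_layer_cake[symmetric]) (simp_all add: N.sigma_finite_measure_axioms)
  finally show ?thesis .
qed

lemma integral_le_integral_of_nn_integral_le:
  fixes X :: "'a \<Rightarrow> real" and Y :: "'b \<Rightarrow> real"
  assumes "prob_space M" and "prob_space N"
    and X: "integrable M X" and Y: "integrable N Y"
    and Y_lower: "AE z in N. c \<le> Y z"
    and le: "(\<integral>\<^sup>+\<omega>. ennreal (X \<omega> - c) \<partial>M) \<le> (\<integral>\<^sup>+z. ennreal (Y z - c) \<partial>N)"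
  shows "integral\<^sup>L M X \<le> integral\<^sup>L N Y"
proof -
  interpret M: prob_space M by fact
  interpret N: prob_space N by fact
  have Y_nn: "(\<integral>\<^sup>+z. ennreal (Y z - c) \<partial>N) = ennreal (\<integral>z. Y z - c \<partial>N)"
    using Y Y_lower by (intro nn_integral_eq_integral) auto
  have "(\<integral>\<omega>. X \<omega> - c \<partial>M) =
      enn2real (\<integral>\<^sup>+\<omega>. ennreal (X \<omega> - c) \<partial>M) - enn2real (\<integral>\<^sup>+\<omega>. ennreal (- (X \<omega> - c)) \<partial>M)"
    using X by (intro real_lebesgue_integral_def) auto
  also have "\<dots> \<le> enn2real (\<integral>\<^sup>+\<omega>. ennreal (X \<omega> - c) \<partial>M)" by simp
  also have "\<dots> \<le> (\<integral>z. Y z - c \<partial>N)"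
    using le Y_lower unfolding Y_nn by (intro enn2real_leI) (auto intro: integral_nonneg_AE)
  finally show ?thesis using X Y by (simp add: M.prob_space N.prob_space)
qed

section \<open>Maxima over a finite type\<close>

lemma abs_MAX_le_sum_abs: "\<bar>MAX x. f x\<bar> \<le> (\<Sum>x\<in>UNIV. \<bar>f x\<bar>)" for f :: "'x::finite \<Rightarrow> real"
proof -
  have "(MAX x. f x) \<in> range f" by (rule Max_in) auto
  then obtain x0 where "(MAX x. f x) = f x0" by blast
  moreover have "\<bar>f x0\<bar> \<le> (\<Sum>x\<in>UNIV. \<bar>f x\<bar>)" by (rule member_le_sum) auto
  ultimately show ?thesis by simp
qed

lemma MAX_mono:
  fixes f g :: "'x::finite \<Rightarrow> 'a::linorder"
  assumes "\<And>x. f x \<le> g x"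
  shows "(MAX x. f x) \<le> (MAX x. g x)"
proof -
  have "f x \<le> (MAX x. g x)" for x
    using assms[of x] by (rule order_trans) (rule Max_ge, auto)
  then show ?thesis by (simp add: Max_le_iff)
qed

lemma integrable_MAX:
  fixes f :: "'a \<Rightarrow> 'x::finite \<Rightarrow> real"
  assumes "\<And>x. integrable M (\<lambda>\<omega>. f \<omega> x)"
  shows "integrable M (\<lambda>\<omega>. MAX x. f \<omega> x)"
proof (rule Bochner_Integration.integrable_bound)
  show "integrable M (\<lambda>\<omega>. \<Sum>x\<in>UNIV. \<bar>f \<omega> x\<bar>)" using assms by auto
  have [measurable]: "(\<lambda>\<omega>. f \<omega> x) \<in> borel_measurable M" for x using assms by auto
  show "(\<lambda>\<omega>. MAX x. f \<omega> x) \<in> borel_measurable M" by measurable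
  show "AE \<omega> in M. norm (MAX x. f \<omega> x) \<le> norm (\<Sum>x\<in>UNIV. \<bar>f \<omega> x\<bar>)"
    using abs_MAX_le_sum_abs by (intro AE_I2) (simp add: sum_nonneg)
qed

section \<open>Gaussian tails\<close>

lemma nn_integral_std_normal_density_nonneg_half:
  "(\<integral>\<^sup>+y. ennreal (std_normal_density y) * indicator {0..} y \<partial>lborel) = ennreal (1/2)"
proof -
  have gauss: "(\<integral>\<^sup>+x. ennreal (indicator {0..} x * exp (-x\<^sup>2)) \<partial>lborel) = ennreal (sqrt pi / 2)"
    using gaussian_moment_0 by (subst nn_integral_eq_integral) (auto simp: has_bochner_integral_iff)
  have "(\<integral>\<^sup>+y. ennreal (std_normal_density y) * indicator {0..} y \<partial>lborel) =
      \<bar>sqrt 2\<bar> * (\<integral>\<^sup>+u. ennreal (std_normal_density (0 + sqrt 2 * u)) * indicator {0..} (0 + sqrt 2 * u) \<partial>lborel)"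
    by (rule nn_integral_real_affine) auto
  also have "\<dots> = sqrt 2 * (\<integral>\<^sup>+u. ennreal (1 / sqrt (2 * pi)) * ennreal (indicator {0..} u * exp (-u\<^sup>2)) \<partial>lborel)"
    by (auto simp: std_normal_density_def power_mult_distrib zero_le_mult_iff ennreal_mult[symmetric]
        split: split_indicator intro!: arg_cong2[where f = "(*)"] nn_integral_cong)
  also have "\<dots> = sqrt 2 * (ennreal (1 / sqrt (2 * pi)) * ennreal (sqrt pi / 2))"
    by (subst nn_integral_cmult) (auto simp: gauss)
  also have "\<dots> = ennreal (sqrt 2 * (1 / sqrt (2 * pi)) * (sqrt pi / 2))"
    by (simp add: ennreal_mult[symmetric] mult.assoc)
  also have "sqrt 2 * (1 / sqrt (2 * pi)) * (sqrt pi / 2) = 1/2"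
    by (simp add: real_sqrt_mult field_simps)
  finally show ?thesis .
qed

lemma std_normal_density_add_le:
  fixes b y :: real
  assumes "0 \<le> b" and "0 \<le> y"
  shows "std_normal_density (b + y) \<le> exp (- b\<^sup>2 / 2) * std_normal_density y"
proof -
  have "exp (- (b + y)\<^sup>2 / 2) \<le> exp (- b\<^sup>2 / 2) * exp (- y\<^sup>2 / 2)"
    using assms by (simp add: exp_add[symmetric] power2_eq_square field_simps)
  then show ?thesis by (simp add: std_normal_density_def field_simps)
qed

lemma normal_density_tail_le:
  fixes b s m :: real
  assumes "0 \<le> b" and "0 < s"
  shows "(\<integral>\<^sup>+x. ennreal (normal_density m s x) * indicator {m + s * b..} x \<partial>lborel)
    \<le> ennreal (exp (- b\<^sup>2 / 2) / 2)"
proof -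
  have standardize: "ennreal s * (ennreal (normal_density m s (m + s * b + s * y)) *
        indicator {m + s * b..} (m + s * b + s * y)) =
      ennreal (std_normal_density (b + y)) * indicator {0..} y" for y
  proof -
    have "(m + s * b + s * y - m)\<^sup>2 = s\<^sup>2 * (b + y)\<^sup>2"
      by (simp add: power2_eq_square algebra_simps)
    then have "s * normal_density m s (m + s * b + s * y) = std_normal_density (b + y)"
      using \<open>0 < s\<close> by (simp add: normal_density_def std_normal_density_def real_sqrt_mult field_simps)
    moreover have "indicator {m + s * b..} (m + s * b + s * y) = (indicator {0..} y :: ennreal)"
      using \<open>0 < s\<close> by (auto split: split_indicator simp: zero_le_mult_iff)
    ultimately show ?thesis
      using \<open>0 < s\<close> by (simp add: ennreal_mult[symmetric] mult.assoc[symmetric])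
  qed
  have "(\<integral>\<^sup>+x. ennreal (normal_density m s x) * indicator {m + s * b..} x \<partial>lborel) =
      \<bar>s\<bar> * (\<integral>\<^sup>+y. ennreal (normal_density m s (m + s * b + s * y)) *
        indicator {m + s * b..} (m + s * b + s * y) \<partial>lborel)"
    using \<open>0 < s\<close> by (intro nn_integral_real_affine) auto
  also have "\<dots> = (\<integral>\<^sup>+y. ennreal (std_normal_density (b + y)) * indicator {0..} y \<partial>lborel)"
    using \<open>0 < s\<close> by (simp add: nn_integral_cmult[symmetric] standardize)
  also have "\<dots> \<le> (\<integral>\<^sup>+y. ennreal (exp (- b\<^sup>2 / 2)) * (ennreal (std_normal_density y) * indicator {0..} y) \<partial>lborel)"
    using std_normal_density_add_le[OF \<open>0 \<le> b\<close>]
    by (intro nn_integral_mono) (auto simp: ennreal_mult[symmetric] ennreal_leI split: split_indicator)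
  also have "\<dots> = ennreal (exp (- b\<^sup>2 / 2)) * ennreal (1/2)"
    by (simp add: nn_integral_cmult nn_integral_std_normal_density_nonneg_half)
  also have "\<dots> = ennreal (exp (- b\<^sup>2 / 2) / 2)"
    by (subst ennreal_mult[symmetric]) auto
  finally show ?thesis .
qed

lemma gaussian_vec_component:
  fixes F :: "'w \<Rightarrow> 'x::finite \<Rightarrow> real"
  assumes "gaussian_vec M F m C"
  shows "real_gaussian_rv M (\<lambda>\<omega>. F \<omega> x) (m x) (C x x)"
proof -
  define e :: "'x \<Rightarrow> real" where "e y = (if y = x then 1 else 0)" for y
  have pick: "(\<Sum>y\<in>UNIV. e y * a y) = a x" for a :: "'x \<Rightarrow> real"
  proof -
    have "(\<Sum>y\<in>UNIV. e y * a y) = (\<Sum>y\<in>UNIV. if y = x then a y else 0)"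
      by (rule sum.cong) (auto simp: e_def)
    then show ?thesis by simp
  qed
  have "real_gaussian_rv M (\<lambda>\<omega>. \<Sum>y\<in>UNIV. e y * F \<omega> y) (\<Sum>y\<in>UNIV. e y * m y)
      (\<Sum>y\<in>UNIV. \<Sum>z\<in>UNIV. e y * e z * C y z)"
    using assms unfolding gaussian_vec_def by blast
  moreover have "(\<Sum>y\<in>UNIV. \<Sum>z\<in>UNIV. e y * e z * C y z) = C x x"
    by (simp add: mult.assoc sum_distrib_left[symmetric] pick)
  ultimately show ?thesis by (simp add: pick)
qed

lemma real_gaussian_rv_variance_nonneg: "real_gaussian_rv M X m v \<Longrightarrow> 0 \<le> v"
  by (cases "v = 0") (auto simp: real_gaussian_rv_def)

lemma real_gaussian_rv_integrable:
  assumes "prob_space M" and X: "real_gaussian_rv M X m v"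
  shows "integrable M X"
proof (cases "v = 0")
  case True
  then have "AE \<omega> in M. m = X \<omega>" and "X \<in> borel_measurable M"
    using X by (auto simp: real_gaussian_rv_def)
  interpret prob_space M by fact
  show ?thesis
    using integrable_cong_AE_imp[of M "\<lambda>_. m" X] \<open>AE \<omega> in M. m = X \<omega>\<close> \<open>X \<in> borel_measurable M\<close>
    by simp
next
  case False
  then have "0 < v" and "distributed M lborel X (normal_density m (sqrt v))"
    using X by (auto simp: real_gaussian_rv_def)
  moreover have "integrable lborel (\<lambda>z. normal_density m (sqrt v) z * z)"
    using \<open>0 < v\<close> by (intro integrable_normal_moment_nz_1) simp
  ultimately show ?thesis
    using distributed_integrable[of M lborel X _ "\<lambda>z. z"] by simp
qed

text \<open>For s = 0 this is 0, since x / 0 = 0.\<close>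
definition std_excess :: "real \<Rightarrow> real \<Rightarrow> real \<Rightarrow> real" where
  "std_excess m s y = max 0 ((y - m) / s)"

lemma std_excess_nonneg: "0 \<le> std_excess m s y"
  by (simp add: std_excess_def)

lemma le_add_std_excess: "0 < s \<Longrightarrow> y \<le> m + std_excess m s y * s"
  by (simp add: std_excess_def max_def field_simps)

lemma std_excess_ge_iff:
  assumes "0 < r" and "0 \<le> s"
  shows "r \<le> std_excess m s y \<longleftrightarrow> 0 < s \<and> m + s * r \<le> y"
  using assms
  by (cases "s = 0") (auto simp: std_excess_def le_max_iff_disj pos_le_divide_eq algebra_simps)

lemma real_gaussian_rv_std_excess_tail:
  assumes X: "real_gaussian_rv M X m v" and "0 < r"
  shows "emeasure M {\<omega>\<in>space M. r \<le> std_excess m (sqrt v) (X \<omega>)} \<le> ennreal (exp (- r\<^sup>2 / 2) / 2)"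
proof (cases "v = 0")
  case True
  then show ?thesis using \<open>0 < r\<close> by (simp add: std_excess_ge_iff)
next
  case False
  then have "0 < v" and dist: "distributed M lborel X (normal_density m (sqrt v))"
    using X by (auto simp: real_gaussian_rv_def)
  have "{\<omega>\<in>space M. r \<le> std_excess m (sqrt v) (X \<omega>)} = X -` {m + sqrt v * r..} \<inter> space M"
    using \<open>0 < v\<close> \<open>0 < r\<close> by (auto simp: std_excess_ge_iff)
  also have "emeasure M \<dots> = (\<integral>\<^sup>+x. ennreal (normal_density m (sqrt v) x) * indicator {m + sqrt v * r..} x \<partial>lborel)"
    by (simp add: distributed_emeasure[OF dist])
  also have "\<dots> \<le> ennreal (exp (- r\<^sup>2 / 2) / 2)"
    using \<open>0 < v\<close> \<open>0 < r\<close> by (intro normal_density_tail_le) auto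
  finally show ?thesis .
qed

section \<open>The shifted exponential distribution\<close>

lemma density_shifted_exp_eq_distr:
  "density lborel (shifted_exp_density s l) = distr (density lborel (exponential_density l)) borel ((+) s)"
proof -
  have "density lborel (shifted_exp_density s l) = density (distr lborel borel ((+) s)) (shifted_exp_density s l)"
    by (simp add: lborel_distr_plus)
  also have "\<dots> = distr (density lborel (\<lambda>x. shifted_exp_density s l (s + x))) borel ((+) s)"
    by (rule density_distr) (auto simp: shifted_exp_density_def)
  also have "(\<lambda>x. shifted_exp_density s l (s + x)) = exponential_density l"
    by (simp add: shifted_exp_density_def fun_eq_iff)
  finally show ?thesis .
qed

lemma prob_space_shifted_exp: "0 < l \<Longrightarrow> prob_space (density lborel (shifted_exp_density s l))"
  unfolding density_shifted_exp_eq_distr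
  by (rule prob_space.prob_space_distr[OF prob_space_exponential_density]) auto

lemma emeasure_exponential_greater:
  assumes "0 < l" and "0 \<le> c"
  shows "emeasure (density lborel (exponential_density l)) {y. c < y} = ennreal (exp (- c * l))"
proof -
  interpret E: prob_space "density lborel (exponential_density l)"
    by (rule prob_space_exponential_density[OF \<open>0 < l\<close>])
  have "emeasure (density lborel (exponential_density l)) {..c} = ennreal (1 - exp (- c * l))"
    using emeasure_erlang_density[OF \<open>0 < l\<close>, of 0 c] \<open>0 \<le> c\<close> by (simp add: erlang_CDF_def mult.commute)
  moreover have "0 \<le> 1 - exp (- c * l)" using assms by simp
  ultimately have cdf: "E.prob {..c} = 1 - exp (- c * l)"
    by (simp add: E.emeasure_eq_measure)
  have "{y. c < y} = space (density lborel (exponential_density l)) - {..c}" by auto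
  then have "E.prob {y. c < y} = 1 - E.prob {..c}"
    by (metis E.prob_compl atMost_borel sets_density sets_lborel)
  with cdf show ?thesis by (simp add: E.emeasure_eq_measure)
qed

lemma emeasure_shifted_exp_greater:
  assumes "0 < l" and "0 \<le> c"
  shows "emeasure (density lborel (shifted_exp_density s l)) {z. s + c < z} = ennreal (exp (- c * l))"
proof -
  have "emeasure (density lborel (shifted_exp_density s l)) {z. s + c < z} =
      emeasure (density lborel (exponential_density l))
        ((+) s -` {z. s + c < z} \<inter> space (density lborel (exponential_density l)))"
    unfolding density_shifted_exp_eq_distr by (rule emeasure_distr) auto
  also have "(+) s -` {z. s + c < z} \<inter> space (density lborel (exponential_density l)) = {y. c < y}"
    by auto
  finally show ?thesis using emeasure_exponential_greater[OF assms] by simp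
qed

lemma AE_shifted_exp_ge_shift: "AE z in density lborel (shifted_exp_density s l). s \<le> z"
  unfolding density_shifted_exp_eq_distr
  by (subst AE_distr_iff) (auto simp: AE_density exponential_density_def not_less)

lemma integrable_exponential_id:
  assumes "0 < l"
  shows "integrable (density lborel (exponential_density l)) (\<lambda>y. y)"
proof -
  have "integrable lborel (\<lambda>y. exponential_density l y * y)"
  proof (rule integrableI_nonneg)
    show "AE x in lborel. 0 \<le> exponential_density l x * x"
      using assms by (auto simp: exponential_density_def)
    show "(\<integral>\<^sup>+ x. ennreal (exponential_density l x * x) \<partial>lborel) < \<infinity>"
      using nn_integral_erlang_ith_moment[OF assms, of 0 1] by simp
  qed simp
  then show ?thesis
    using assms by (subst integrable_density) (auto simp: exponential_density_nonneg)
qed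

lemma integrable_shifted_exp_of_linear_growth:
  fixes g :: "real \<Rightarrow> real"
  assumes "0 < l" and "0 \<le> s" and g[measurable]: "g \<in> borel_measurable borel"
    and growth: "\<And>z. 0 \<le> z \<Longrightarrow> \<bar>g z\<bar> \<le> A + B * z"
  shows "integrable (density lborel (shifted_exp_density s l)) g"
proof -
  interpret E: prob_space "density lborel (exponential_density l)"
    by (rule prob_space_exponential_density[OF \<open>0 < l\<close>])
  have "integrable (density lborel (exponential_density l)) (\<lambda>y. g (s + y))"
  proof (rule Bochner_Integration.integrable_bound)
    show "integrable (density lborel (exponential_density l)) (\<lambda>y. A + B * s + B * y)"
      using integrable_exponential_id[OF \<open>0 < l\<close>] by auto
    have "AE y in density lborel (exponential_density l). 0 \<le> y"
      by (auto simp: AE_density exponential_density_def not_less)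
    then show "AE y in density lborel (exponential_density l). norm (g (s + y)) \<le> norm (A + B * s + B * y)"
    proof eventually_elim
      case (elim y)
      then have "\<bar>g (s + y)\<bar> \<le> A + B * (s + y)" using \<open>0 \<le> s\<close> by (intro growth) simp
      then show ?case by (simp add: algebra_simps)
    qed
  qed simp
  then show ?thesis
    unfolding density_shifted_exp_eq_distr by (subst integrable_distr_eq) auto
qed

lemma integrable_shifted_exp_MAX_add_sqrt:
  fixes \<mu> \<sigma> :: "'x::finite \<Rightarrow> real"
  assumes "0 < l" and "0 \<le> s" and \<sigma>_nonneg: "\<And>x. 0 \<le> \<sigma> x"
  shows "integrable (density lborel (shifted_exp_density s l)) (\<lambda>z. MAX x. \<mu> x + sqrt z * \<sigma> x)"
proof (rule integrable_shifted_exp_of_linear_growth[OF assms(1,2)])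
  show "(\<lambda>z. MAX x. \<mu> x + sqrt z * \<sigma> x) \<in> borel_measurable borel" by measurable
  fix z :: real assume "0 \<le> z"
  have "sqrt z \<le> 1 + z"
  proof (cases "z \<le> 1")
    case True
    then have "sqrt z \<le> 1" by simp
    then show ?thesis using \<open>0 \<le> z\<close> by linarith
  next
    case False
    then have "sqrt z \<le> z" by (simp add: real_sqrt_le_iff' power2_eq_square)
    then show ?thesis by linarith
  qed
  have "\<bar>\<mu> x + sqrt z * \<sigma> x\<bar> \<le> \<bar>\<mu> x\<bar> + \<sigma> x + \<sigma> x * z" for x
  proof -
    have "\<bar>\<mu> x + sqrt z * \<sigma> x\<bar> \<le> \<bar>\<mu> x\<bar> + sqrt z * \<sigma> x"
      using abs_triangle_ineq[of "\<mu> x" "sqrt z * \<sigma> x"] \<open>0 \<le> z\<close> \<sigma>_nonneg[of x] by simp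
    also have "\<dots> \<le> \<bar>\<mu> x\<bar> + \<sigma> x + \<sigma> x * z"
      using mult_right_mono[OF \<open>sqrt z \<le> 1 + z\<close> \<sigma>_nonneg[of x]] by (simp add: algebra_simps)
    finally show ?thesis .
  qed
  then have "(\<Sum>x\<in>UNIV. \<bar>\<mu> x + sqrt z * \<sigma> x\<bar>) \<le> (\<Sum>x\<in>UNIV. \<bar>\<mu> x\<bar> + \<sigma> x + \<sigma> x * z)"
    by (rule sum_mono)
  with abs_MAX_le_sum_abs
  have "\<bar>MAX x. \<mu> x + sqrt z * \<sigma> x\<bar> \<le> (\<Sum>x\<in>UNIV. \<bar>\<mu> x\<bar> + \<sigma> x + \<sigma> x * z)"
    by (rule order_trans)
  then show "\<bar>MAX x. \<mu> x + sqrt z * \<sigma> x\<bar> \<le> (\<Sum>x\<in>UNIV. \<bar>\<mu> x\<bar> + \<sigma> x) + (\<Sum>x\<in>UNIV. \<sigma> x) * z"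
    by (simp add: sum.distrib sum_distrib_right)
qed

section \<open>The expected maximum\<close>

lemma MAX_le_MAX_add_std_excess:
  fixes y m s :: "'x::finite \<Rightarrow> real"
  assumes s_nonneg: "\<And>x. 0 \<le> s x" and degenerate: "\<And>x. s x = 0 \<Longrightarrow> y x = m x"
  shows "(MAX x. y x) \<le> (MAX x. m x + (MAX x'. std_excess (m x') (s x') (y x')) * s x)"
proof (rule MAX_mono)
  fix x
  let ?R = "MAX x'. std_excess (m x') (s x') (y x')"
  show "y x \<le> m x + ?R * s x"
  proof (cases "s x = 0")
    case False
    then have "0 < s x" using s_nonneg[of x] by simp
    have "std_excess (m x) (s x) (y x) \<le> ?R" by (rule Max_ge) auto
    then have "std_excess (m x) (s x) (y x) * s x \<le> ?R * s x" using s_nonneg by (rule mult_right_mono)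
    then show ?thesis using le_add_std_excess[OF \<open>0 < s x\<close>, of "y x" "m x"] by linarith
  qed (simp add: degenerate)
qed

lemma MAX_std_excess_nonneg: "0 \<le> (MAX x. std_excess (m x) (s x) (y x))"
  for m s y :: "'x::finite \<Rightarrow> real"
  by (rule order_trans[OF std_excess_nonneg Max_ge]) auto

lemma AE_MAX_gaussian_le_MAX_add_sqrt:
  fixes F :: "'w \<Rightarrow> 'x::finite \<Rightarrow> real"
  assumes gaussian: "\<And>x. real_gaussian_rv M (\<lambda>\<omega>. F \<omega> x) (\<mu> x) (v x)"
  shows "AE \<omega> in M. (MAX x. F \<omega> x)
    \<le> (MAX x. \<mu> x + sqrt ((MAX x'. std_excess (\<mu> x') (sqrt (v x')) (F \<omega> x'))\<^sup>2) * sqrt (v x))"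
proof -
  have "AE \<omega> in M. \<forall>x\<in>UNIV. sqrt (v x) = 0 \<longrightarrow> F \<omega> x = \<mu> x"
    using gaussian by (intro AE_finite_allI) (auto simp: real_gaussian_rv_def)
  then show ?thesis
  proof eventually_elim
    case (elim \<omega>)
    have "0 \<le> sqrt (v x)" for x
      using real_gaussian_rv_variance_nonneg[OF gaussian[of x]] by simp
    then show ?case
      using MAX_le_MAX_add_std_excess[of "\<lambda>x. sqrt (v x)" "F \<omega>" \<mu>] elim
        abs_of_nonneg[OF MAX_std_excess_nonneg[of \<mu> "\<lambda>x. sqrt (v x)" "F \<omega>"]]
      by simp
  qed
qed

lemma emeasure_MAX_std_excess_ge:
  fixes F :: "'w \<Rightarrow> 'x::finite \<Rightarrow> real"
  assumes gaussian: "\<And>x. real_gaussian_rv M (\<lambda>\<omega>. F \<omega> x) (\<mu> x) (v x)" and "0 < r"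
  shows "emeasure M {\<omega>\<in>space M. r \<le> (MAX x. std_excess (\<mu> x) (sqrt (v x)) (F \<omega> x))}
    \<le> ennreal (CARD('x) * (exp (- r\<^sup>2 / 2) / 2))"
proof -
  define T where "T x = {\<omega>\<in>space M. r \<le> std_excess (\<mu> x) (sqrt (v x)) (F \<omega> x)}" for x
  have [measurable]: "(\<lambda>\<omega>. F \<omega> x) \<in> borel_measurable M" for x
    using gaussian[of x] by (simp add: real_gaussian_rv_def)
  have T_sets: "T x \<in> sets M" for x unfolding T_def std_excess_def by measurable
  have "{\<omega>\<in>space M. r \<le> (MAX x. std_excess (\<mu> x) (sqrt (v x)) (F \<omega> x))} \<subseteq> (\<Union>x. T x)"
  proof safe
    fix \<omega> assume "\<omega> \<in> space M" and r_le: "r \<le> (MAX x. std_excess (\<mu> x) (sqrt (v x)) (F \<omega> x))"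
    have "(MAX x. std_excess (\<mu> x) (sqrt (v x)) (F \<omega> x)) \<in> range (\<lambda>x. std_excess (\<mu> x) (sqrt (v x)) (F \<omega> x))"
      by (rule Max_in) auto
    then obtain x where "(MAX x. std_excess (\<mu> x) (sqrt (v x)) (F \<omega> x)) = std_excess (\<mu> x) (sqrt (v x)) (F \<omega> x)"
      by blast
    then have "\<omega> \<in> T x" using \<open>\<omega> \<in> space M\<close> r_le by (simp add: T_def)
    then show "\<omega> \<in> (\<Union>x. T x)" by blast
  qed
  then have "emeasure M {\<omega>\<in>space M. r \<le> (MAX x. std_excess (\<mu> x) (sqrt (v x)) (F \<omega> x))}
      \<le> emeasure M (\<Union>x. T x)"
    using T_sets by (intro emeasure_mono) auto
  also have "\<dots> \<le> (\<Sum>x\<in>UNIV. emeasure M (T x))"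
    using T_sets by (intro emeasure_subadditive_finite) auto
  also have "\<dots> \<le> (\<Sum>x\<in>(UNIV::'x set). ennreal (exp (- r\<^sup>2 / 2) / 2))"
    unfolding T_def using real_gaussian_rv_std_excess_tail[OF gaussian \<open>0 < r\<close>] by (rule sum_mono)
  also have "\<dots> = ennreal (CARD('x) * (exp (- r\<^sup>2 / 2) / 2))"
    by (simp add: ennreal_of_nat_eq_real_of_nat)
      (metis ennreal_mult' of_nat_0_le_iff times_divide_eq_right)
  finally show ?thesis .
qed

lemma card_mult_half_exp_eq_shifted_exp:
  fixes n a :: real
  assumes "2 \<le> n"
  shows "n * (exp (- a / 2) / 2) = exp (- (a - 2 * ln (n / 2)) * (1/2))"
proof -
  have "exp (- (a - 2 * ln (n / 2)) * (1/2)) = exp (ln (n / 2)) * exp (- a / 2)"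
    by (simp add: exp_add[symmetric] field_simps)
  also have "exp (ln (n / 2)) = n / 2" using assms by simp
  finally show ?thesis by simp
qed

text \<open>The shift 2 ln (|X|/2) is chosen so that above it the union bound over the coordinates
  is exactly the shifted exponential tail.\<close>
lemma emeasure_sq_MAX_std_excess_le_shifted_exp:
  fixes F :: "'w \<Rightarrow> 'x::finite \<Rightarrow> real"
  assumes "prob_space M" and card: "CARD('x) \<ge> 2"
    and gaussian: "\<And>x. real_gaussian_rv M (\<lambda>\<omega>. F \<omega> x) (\<mu> x) (v x)"
  shows "emeasure M {\<omega>\<in>space M. a \<le> (MAX x. std_excess (\<mu> x) (sqrt (v x)) (F \<omega> x))\<^sup>2}
    \<le> emeasure (density lborel (shifted_exp_density (2 * ln (CARD('x) / 2)) (1/2))) {z. a < z}"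
proof -
  define s where "s = 2 * ln (real CARD('x) / 2)"
  define N where "N = density lborel (shifted_exp_density s (1/2))"
  define R where "R \<omega> = (MAX x. std_excess (\<mu> x) (sqrt (v x)) (F \<omega> x))" for \<omega>
  have "0 \<le> s" using card by (simp add: s_def)
  show ?thesis
  proof (cases "a \<le> s")
    case True
    interpret prob_space M by fact
    have "emeasure M {\<omega>\<in>space M. a \<le> (R \<omega>)\<^sup>2} \<le> 1" by (rule emeasure_le_1)
    also have "1 = emeasure N {z. s + 0 < z}"
      unfolding N_def by (subst emeasure_shifted_exp_greater) auto
    also have "\<dots> \<le> emeasure N {z. a < z}"
      using True by (intro emeasure_mono) (auto simp: N_def)
    finally show ?thesis by (simp add: R_def N_def s_def)
  next
    case False
    then have "0 < a" using \<open>0 \<le> s\<close> by simp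
    have "0 \<le> R \<omega>" for \<omega> unfolding R_def by (rule MAX_std_excess_nonneg)
    then have "{\<omega>\<in>space M. a \<le> (R \<omega>)\<^sup>2} = {\<omega>\<in>space M. sqrt a \<le> R \<omega>}"
      using real_sqrt_le_iff[of a] by (metis real_sqrt_abs abs_of_nonneg)
    then have "emeasure M {\<omega>\<in>space M. a \<le> (R \<omega>)\<^sup>2} \<le> ennreal (CARD('x) * (exp (- a / 2) / 2))"
      using emeasure_MAX_std_excess_ge[OF gaussian, of "sqrt a"] \<open>0 < a\<close> by (simp add: R_def)
    also have "\<dots> = ennreal (exp (- (a - s) * (1/2)))"
      unfolding s_def using card by (intro arg_cong[where f = ennreal] card_mult_half_exp_eq_shifted_exp) simp
    also have "\<dots> = emeasure N {z. s + (a - s) < z}"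
      unfolding N_def using False by (subst emeasure_shifted_exp_greater) auto
    finally show ?thesis by (simp add: R_def N_def s_def)
  qed
qed

lemma expectation_MAX_gaussian_le_shifted_exp:
  fixes F :: "'w \<Rightarrow> 'x::finite \<Rightarrow> real" and \<mu> v :: "'x \<Rightarrow> real"
  assumes "prob_space M" and card: "CARD('x) \<ge> 2"
    and gaussian: "\<And>x. real_gaussian_rv M (\<lambda>\<omega>. F \<omega> x) (\<mu> x) (v x)"
  shows "(\<integral>\<omega>. (MAX x. F \<omega> x) \<partial>M)
    \<le> (\<integral>z. (MAX x. \<mu> x + sqrt z * sqrt (v x))
        \<partial>density lborel (shifted_exp_density (2 * ln (real CARD('x) / 2)) (1/2)))"
proof -
  define s where "s = 2 * ln (real CARD('x) / 2)"
  define N where "N = density lborel (shifted_exp_density s (1/2))"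
  define \<sigma> where "\<sigma> x = sqrt (v x)" for x
  define R where "R \<omega> = (MAX x. std_excess (\<mu> x) (\<sigma> x) (F \<omega> x))" for \<omega>
  define g where "g z = (MAX x. \<mu> x + sqrt z * \<sigma> x)" for z
  have "0 \<le> s" using card by (simp add: s_def)
  have \<sigma>_nonneg: "0 \<le> \<sigma> x" for x
    using real_gaussian_rv_variance_nonneg[OF gaussian[of x]] by (simp add: \<sigma>_def)
  have [measurable]: "(\<lambda>\<omega>. F \<omega> x) \<in> borel_measurable M" for x
    using gaussian[of x] by (simp add: real_gaussian_rv_def)
  have "mono g"
    unfolding g_def using \<sigma>_nonneg by (intro monoI MAX_mono add_left_mono mult_right_mono) simp_all
  have "AE \<omega> in M. (MAX x. F \<omega> x) \<le> g ((R \<omega>)\<^sup>2)"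
    using AE_MAX_gaussian_le_MAX_add_sqrt[OF gaussian] by (simp add: g_def R_def \<sigma>_def)
  then have "(\<integral>\<^sup>+\<omega>. ennreal ((MAX x. F \<omega> x) - g 0) \<partial>M) \<le> (\<integral>\<^sup>+\<omega>. ennreal (g ((R \<omega>)\<^sup>2) - g 0) \<partial>M)"
    by (intro nn_integral_mono_AE) (auto elim!: eventually_mono intro: ennreal_leI)
  also have "\<dots> \<le> (\<integral>\<^sup>+z. ennreal (g z - g 0) \<partial>N)"
  proof (rule nn_integral_mono_stochastic_dominance)
    show "prob_space N" unfolding N_def by (rule prob_space_shifted_exp) simp
    show "(\<lambda>\<omega>. (R \<omega>)\<^sup>2) \<in> borel_measurable M" unfolding R_def std_excess_def by measurable
    show "mono (\<lambda>z. g z - g 0)" using \<open>mono g\<close> by (simp add: mono_def)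
    show "emeasure M {\<omega>\<in>space M. a \<le> (R \<omega>)\<^sup>2} \<le> emeasure N {z. a < z}" for a
      unfolding R_def N_def s_def \<sigma>_def
      by (rule emeasure_sq_MAX_std_excess_le_shifted_exp[OF \<open>prob_space M\<close> card gaussian])
  qed (simp_all add: \<open>prob_space M\<close> N_def g_def R_def)
  finally have nn_le: "(\<integral>\<^sup>+\<omega>. ennreal ((MAX x. F \<omega> x) - g 0) \<partial>M) \<le> (\<integral>\<^sup>+z. ennreal (g z - g 0) \<partial>N)" .
  have "(\<integral>\<omega>. (MAX x. F \<omega> x) \<partial>M) \<le> (\<integral>z. g z \<partial>N)"
  proof (rule integral_le_integral_of_nn_integral_le[OF \<open>prob_space M\<close> _ _ _ _ nn_le])
    show "prob_space N" unfolding N_def by (rule prob_space_shifted_exp) simp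
    show "integrable M (\<lambda>\<omega>. MAX x. F \<omega> x)"
      using real_gaussian_rv_integrable[OF \<open>prob_space M\<close> gaussian] by (rule integrable_MAX)
    show "integrable N g"
      unfolding N_def g_def using \<open>0 \<le> s\<close> \<sigma>_nonneg by (intro integrable_shifted_exp_MAX_add_sqrt) auto
    show "AE z in N. g 0 \<le> g z"
      using AE_shifted_exp_ge_shift[of s "1/2"] unfolding N_def
      by eventually_elim (use \<open>0 \<le> s\<close> \<open>mono g\<close> in \<open>simp add: monoD\<close>)
  qed
  then show ?thesis by (simp add: g_def N_def s_def \<sigma>_def)
qed

text \<open>Only the Gaussianity of the coordinates of the posterior is used: the kernel, the noise
  level and the data enter only through the posterior mean and standard deviation.\<close>
theorem lemma4p2:
  fixes k :: "'x::finite \<Rightarrow> 'x \<Rightarrow> real"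
    and s2 :: real
    and t :: nat
    and xs :: "'x list" and ys :: "real list"
    and M :: "'w measure" and F :: "'w \<Rightarrow> 'x \<Rightarrow> real"
  assumes card_X: "CARD('x) \<ge> 2"
    and k_psd: "psd_kernel k"
    and noise_pos: "s2 > 0"
    and t_ge: "t \<ge> 1"
    and len_xs: "length xs = t - 1" and len_ys: "length ys = t - 1"
    and posterior: "gaussian_vec M F (post_mean k s2 xs ys) (post_cov k s2 xs)"
  shows "(\<integral>\<omega>. (MAX x. F \<omega> x) \<partial>M)
     \<le> (\<integral>z. (MAX x. post_mean k s2 xs ys x + sqrt z * post_sd k s2 xs x)
          \<partial>(density lborel (shifted_exp_density (2 * ln (real CARD('x) / 2)) (1/2))))"
proof -
  have "prob_space M" using posterior by (simp add: gaussian_vec_def)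
  moreover have "real_gaussian_rv M (\<lambda>\<omega>. F \<omega> x) (post_mean k s2 xs ys x) (post_cov k s2 xs x x)" for x
    using posterior by (rule gaussian_vec_component)
  ultimately show ?thesis
    unfolding post_sd_def by (rule expectation_MAX_gaussian_le_shifted_exp[OF _ card_X])
qed

end
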